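(* Let $\Omega\subseteq\mathbb{R}^n$ be open and let $f\in\mathbb{A}(\Omega)$. Then: (i) for every dense subset $D$ of $\Omega$ the function $F(D,\Omega,f)$ is S-continuous; (ii) the function $G(f)=[I(S(I(f))),S(I(S(f)))]$ is D-continuous; (iii) both functions $F(S(I(f)))$ and $F(I(S(f)))$ are H-continuous and $F(S(I(f)))\le F(I(S(f)))$.
   Context: $\overline{\mathbb{R}}=\mathbb{R}\cup\{\pm\infty\}$ and $\mathbb{I}\overline{\mathbb{R}}=\{[\underline a,\overline a]:\underline a,\overline a\in\overline{\mathbb{R}},\ \underline a\le\overline a\}$, with $a\in\overline{\mathbb{R}}$ identified with $[a,a]$; extended-real-valued functions are thus regarded as interval functions. $\mathbb{A}(\Omega)$ is the set of all functions $f:\Omega\to\mathbb{I}\overline{\mathbb{R}}$, written $f=[\underline f,\overline f]$. $B_\delta(x)=\{y\in\Omega:\|x-y\|<\delta\}$. For a dense subset $D\subseteq\Omega$ and $f\in\mathbb{A}(D)$ define $I(D,\Omega,f)(x)=\sup_{\delta>0}\inf\{z\in f(y):y\in B_\delta(x)\cap D\}$, $S(D,\Omega,f)(x)=\inf_{\delta>0}\sup\{z\in f(y):y\in B_\delta(x)\cap D\}$, and $F(D,\Omega,f)(x)=[I(D,\Omega,f)(x),S(D,\Omega,f)(x)]$; when $D=\Omega$ write $I(f),S(f),F(f)$ (for $f\in\mathbb{A}(\Omega)$, $F(D,\Omega,f)$ uses the restriction of $f$ to $D$). The order on intervals is $[\underline a,\overline a]\le[\underline b,\overline b]$ iff $\underline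 a\le\underline b$ and $\overline a\le\overline b$, and $f\le g$ means $f(x)\le g(x)$ for all $x\in\Omega$. A function $f\in\mathbb{A}(\Omega)$ is S-continuous if $F(f)=f$; D-continuous if $F(D,\Omega,f)=f$ for every dense subset $D$ of $\Omega$; H-continuous if for every $g\in\mathbb{A}(\Omega)$ with $g(x)\subseteq f(x)$ for all $x$ one has $F(g)=f$. *)

theory Defs
  imports "HOL-Analysis.Analysis"
begin

text \<open>Intervals [a,b] of extended reals are represented as pairs (a,b) with a \<le> b.
  An interval function on \<Omega> is a map into ereal \<times> ereal; only its values on \<Omega> matter.\<close>

definition IA :: "'a::real_normed_vector set \<Rightarrow> ('a \<Rightarrow> ereal \<times> ereal) set" where
  "IA \<Omega> = {f. \<forall>x\<in>\<Omega>. fst (f x) \<le> snd (f x)}"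

definition Bd :: "'a::real_normed_vector set \<Rightarrow> real \<Rightarrow> 'a \<Rightarrow> 'a set" where
  "Bd \<Omega> \<delta> x = {y\<in>\<Omega>. norm (x - y) < \<delta>}"

definition dense_subset :: "'a::real_normed_vector set \<Rightarrow> 'a set \<Rightarrow> bool" where
  "dense_subset D \<Omega> \<longleftrightarrow> D \<subseteq> \<Omega> \<and> \<Omega> \<subseteq> closure D"

definition Ilow :: "'a::real_normed_vector set \<Rightarrow> 'a set \<Rightarrow> ('a \<Rightarrow> ereal \<times> ereal) \<Rightarrow> 'a \<Rightarrow> ereal" where
  "Ilow D \<Omega> f x = (SUP \<delta>\<in>{0<..}. Inf {z. \<exists>y\<in>Bd \<Omega> \<delta> x \<inter> D. fst (f y) \<le> z \<and> z \<le> snd (f y)})"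

definition Supp :: "'a::real_normed_vector set \<Rightarrow> 'a set \<Rightarrow> ('a \<Rightarrow> ereal \<times> ereal) \<Rightarrow> 'a \<Rightarrow> ereal" where
  "Supp D \<Omega> f x = (INF \<delta>\<in>{0<..}. Sup {z. \<exists>y\<in>Bd \<Omega> \<delta> x \<inter> D. fst (f y) \<le> z \<and> z \<le> snd (f y)})"

definition Fenv :: "'a::real_normed_vector set \<Rightarrow> 'a set \<Rightarrow> ('a \<Rightarrow> ereal \<times> ereal) \<Rightarrow> 'a \<Rightarrow> ereal \<times> ereal" where
  "Fenv D \<Omega> f x = (Ilow D \<Omega> f x, Supp D \<Omega> f x)"

definition deg :: "('a \<Rightarrow> ereal) \<Rightarrow> 'a \<Rightarrow> ereal \<times> ereal" where
  "deg g = (\<lambda>x. (g x, g x))"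

definition ile :: "'a set \<Rightarrow> ('a \<Rightarrow> ereal \<times> ereal) \<Rightarrow> ('a \<Rightarrow> ereal \<times> ereal) \<Rightarrow> bool" where
  "ile \<Omega> f g \<longleftrightarrow> (\<forall>x\<in>\<Omega>. fst (f x) \<le> fst (g x) \<and> snd (f x) \<le> snd (g x))"

definition S_continuous :: "'a::real_normed_vector set \<Rightarrow> ('a \<Rightarrow> ereal \<times> ereal) \<Rightarrow> bool" where
  "S_continuous \<Omega> f \<longleftrightarrow> f \<in> IA \<Omega> \<and> (\<forall>x\<in>\<Omega>. Fenv \<Omega> \<Omega> f x = f x)"

definition D_continuous :: "'a::real_normed_vector set \<Rightarrow> ('a \<Rightarrow> ereal \<times> ereal) \<Rightarrow> bool" where
  "D_continuous \<Omega> f \<longleftrightarrow> f \<in> IA \<Omega> \<and>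
     (\<forall>D. dense_subset D \<Omega> \<longrightarrow> (\<forall>x\<in>\<Omega>. Fenv D \<Omega> f x = f x))"

definition H_continuous :: "'a::real_normed_vector set \<Rightarrow> ('a \<Rightarrow> ereal \<times> ereal) \<Rightarrow> bool" where
  "H_continuous \<Omega> f \<longleftrightarrow> f \<in> IA \<Omega> \<and>
     (\<forall>g\<in>IA \<Omega>. (\<forall>x\<in>\<Omega>. fst (f x) \<le> fst (g x) \<and> snd (g x) \<le> snd (f x))
        \<longrightarrow> (\<forall>x\<in>\<Omega>. Fenv \<Omega> \<Omega> g x = f x))"

end

theory Submission
  imports Defs
begin

text \<open>For an extended-real function \<open>g\<close> write \<open>I\<^sub>D g\<close> and \<open>S\<^sub>D g\<close> for its lower and upper
  envelopes along \<open>D\<close>; then \<open>F(D,\<Omega>,f) = [I\<^sub>D f\<^sub>1, S\<^sub>D f\<^sub>2]\<close> for \<open>f = [f\<^sub>1, f\<^sub>2]\<close>, so everything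
  reduces to these scalar operators. \<open>I = I\<^sub>\<Omega>\<close> is monotone, \<open>I g \<le> g\<close> and \<open>I \<circ> I\<^sub>D = I\<^sub>D\<close> on \<open>\<Omega>\<close>,
  and \<open>S g = - I (- g)\<close>. This gives (i), and by pure order reasoning \<open>S I S I = S I\<close> and
  \<open>I S I S = I S\<close>, which force \<open>F(g) = F(h)\<close> for every \<open>g\<close> squeezed between \<open>I h\<close> and \<open>S h\<close>
  when \<open>h = S I f\<^sub>1\<close> or \<open>h = I S f\<^sub>2\<close> (iii). The one topological input, needed for (ii), is
  that along a dense \<open>D\<close> the lower envelope of an upper semicontinuous \<open>\<psi>\<close> is \<open>I \<psi>\<close>: near
  every \<open>z\<close> some point of \<open>D\<close> has \<open>\<psi>\<close>-value not much above \<open>\<psi> z\<close>.\<close>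

definition lower_env :: "'a::real_normed_vector set \<Rightarrow> 'a set \<Rightarrow> ('a \<Rightarrow> ereal) \<Rightarrow> 'a \<Rightarrow> ereal" where
  "lower_env D \<Omega> g x = (SUP \<delta>\<in>{0<..}. INF y\<in>Bd \<Omega> \<delta> x \<inter> D. g y)"

definition upper_env :: "'a::real_normed_vector set \<Rightarrow> 'a set \<Rightarrow> ('a \<Rightarrow> ereal) \<Rightarrow> 'a \<Rightarrow> ereal" where
  "upper_env D \<Omega> g x = (INF \<delta>\<in>{0<..}. SUP y\<in>Bd \<Omega> \<delta> x \<inter> D. g y)"

lemma Inf_interval_union:
  fixes f :: "'a \<Rightarrow> ereal \<times> ereal"
  assumes "\<forall>y\<in>A. fst (f y) \<le> snd (f y)"
  shows "Inf {z. \<exists>y\<in>A. fst (f y) \<le> z \<and> z \<le> snd (f y)} = (INF y\<in>A. fst (f y))"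
proof (rule antisym)
  show "Inf {z. \<exists>y\<in>A. fst (f y) \<le> z \<and> z \<le> snd (f y)} \<le> (INF y\<in>A. fst (f y))"
    by (rule INF_greatest, rule Inf_lower) (use assms in auto)
  show "(INF y\<in>A. fst (f y)) \<le> Inf {z. \<exists>y\<in>A. fst (f y) \<le> z \<and> z \<le> snd (f y)}"
    by (rule Inf_greatest) (auto intro: INF_lower2)
qed

lemma Sup_interval_union:
  fixes f :: "'a \<Rightarrow> ereal \<times> ereal"
  assumes "\<forall>y\<in>A. fst (f y) \<le> snd (f y)"
  shows "Sup {z. \<exists>y\<in>A. fst (f y) \<le> z \<and> z \<le> snd (f y)} = (SUP y\<in>A. snd (f y))"
proof (rule antisym)
  show "(SUP y\<in>A. snd (f y)) \<le> Sup {z. \<exists>y\<in>A. fst (f y) \<le> z \<and> z \<le> snd (f y)}"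
    by (rule SUP_least, rule Sup_upper) (use assms in auto)
  show "Sup {z. \<exists>y\<in>A. fst (f y) \<le> z \<and> z \<le> snd (f y)} \<le> (SUP y\<in>A. snd (f y))"
    by (rule Sup_least) (auto intro: SUP_upper2)
qed

lemma Ilow_eq_lower_env:
  assumes "f \<in> IA \<Omega>"
  shows "Ilow D \<Omega> f = lower_env D \<Omega> (\<lambda>y. fst (f y))"
  unfolding Ilow_def lower_env_def
  by (intro ext SUP_cong refl Inf_interval_union) (use assms in \<open>auto simp: IA_def Bd_def\<close>)

lemma Supp_eq_upper_env:
  assumes "f \<in> IA \<Omega>"
  shows "Supp D \<Omega> f = upper_env D \<Omega> (\<lambda>y. snd (f y))"
  unfolding Supp_def upper_env_def
  by (intro ext INF_cong refl Sup_interval_union) (use assms in \<open>auto simp: IA_def Bd_def\<close>)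

lemma deg_in_IA: "deg g \<in> IA \<Omega>"
  by (simp add: deg_def IA_def)

lemma Ilow_deg [simp]: "Ilow D \<Omega> (deg g) = lower_env D \<Omega> g"
  by (simp add: Ilow_eq_lower_env[OF deg_in_IA]) (simp add: deg_def)

lemma Supp_deg [simp]: "Supp D \<Omega> (deg g) = upper_env D \<Omega> g"
  by (simp add: Supp_eq_upper_env[OF deg_in_IA]) (simp add: deg_def)

lemma Fenv_eq_envs:
  "f \<in> IA \<Omega> \<Longrightarrow> Fenv D \<Omega> f x = (lower_env D \<Omega> (\<lambda>y. fst (f y)) x, upper_env D \<Omega> (\<lambda>y. snd (f y)) x)"
  by (simp add: Fenv_def Ilow_eq_lower_env Supp_eq_upper_env)

lemma Fenv_deg: "Fenv D \<Omega> (deg g) x = (lower_env D \<Omega> g x, upper_env D \<Omega> g x)"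
  by (simp add: Fenv_def)

lemma upper_env_eq_uminus_lower_env: "upper_env D \<Omega> g x = - lower_env D \<Omega> (\<lambda>y. - g y) x"
  unfolding upper_env_def lower_env_def
  by (simp add: ereal_INF_uminus_eq[symmetric] ereal_SUP_uminus_eq[symmetric])

lemma Bd_half_subset: "y \<in> Bd \<Omega> (\<delta>/2) x \<Longrightarrow> Bd \<Omega> (\<delta>/2) y \<subseteq> Bd \<Omega> \<delta> x"
  unfolding Bd_def using norm_triangle_lt[of "x - y" "y - _" \<delta>] by fastforce

lemma INF_Bd_le_INF_Bd_half:
  fixes g :: "'a::real_normed_vector \<Rightarrow> ereal"
  shows "y \<in> Bd \<Omega> (\<delta>/2) x \<Longrightarrow> (INF z\<in>Bd \<Omega> \<delta> x \<inter> D. g z) \<le> (INF z\<in>Bd \<Omega> (\<delta>/2) y \<inter> D. g z)"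
  using Bd_half_subset[of y \<Omega> \<delta> x] by (intro INF_superset_mono) auto

lemma INF_Bd_le_lower_env: "\<delta> > 0 \<Longrightarrow> (INF y\<in>Bd \<Omega> \<delta> x \<inter> D. g y) \<le> lower_env D \<Omega> g x"
  unfolding lower_env_def by (rule SUP_upper) simp

lemma lower_env_le: "x \<in> \<Omega> \<Longrightarrow> x \<in> D \<Longrightarrow> lower_env D \<Omega> g x \<le> g x"
  unfolding lower_env_def by (rule SUP_least, rule INF_lower2[of x]) (auto simp: Bd_def)

lemma lower_env_mono:
  "(\<And>y. y \<in> \<Omega> \<Longrightarrow> y \<in> D \<Longrightarrow> g y \<le> h y) \<Longrightarrow> lower_env D \<Omega> g x \<le> lower_env D \<Omega> h x"
  unfolding lower_env_def by (rule SUP_mono, rule bexI, rule INF_mono) (auto simp: Bd_def)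

lemma lower_env_antimono_set: "D \<subseteq> E \<Longrightarrow> lower_env E \<Omega> g x \<le> lower_env D \<Omega> g x"
  unfolding lower_env_def by (rule SUP_mono, rule bexI, rule INF_superset_mono) auto

lemma lower_env_idem:
  assumes "x \<in> \<Omega>"
  shows "lower_env \<Omega> \<Omega> (lower_env D \<Omega> g) x = lower_env D \<Omega> g x"
proof (rule antisym)
  show "lower_env \<Omega> \<Omega> (lower_env D \<Omega> g) x \<le> lower_env D \<Omega> g x"
    using assms assms by (rule lower_env_le)
  show "lower_env D \<Omega> g x \<le> lower_env \<Omega> \<Omega> (lower_env D \<Omega> g) x"
    unfolding lower_env_def[of D \<Omega> g x]
  proof (rule SUP_least)
    fix \<delta> :: real assume "\<delta> \<in> {0<..}"
    then have "(INF y\<in>Bd \<Omega> \<delta> x \<inter> D. g y) \<le> (INF y\<in>Bd \<Omega> (\<delta>/2) x \<inter> \<Omega>. lower_env D \<Omega> g y)"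
      by (intro INF_greatest order_trans[OF INF_Bd_le_INF_Bd_half INF_Bd_le_lower_env]) auto
    also have "\<dots> \<le> lower_env \<Omega> \<Omega> (lower_env D \<Omega> g) x"
      using \<open>\<delta> \<in> {0<..}\<close> by (intro INF_Bd_le_lower_env) simp
    finally show "(INF y\<in>Bd \<Omega> \<delta> x \<inter> D. g y) \<le> lower_env \<Omega> \<Omega> (lower_env D \<Omega> g) x" .
  qed
qed

lemma upper_env_ge: "x \<in> \<Omega> \<Longrightarrow> x \<in> D \<Longrightarrow> g x \<le> upper_env D \<Omega> g x"
  using lower_env_le[of x \<Omega> D "\<lambda>y. - g y"]
  by (simp add: upper_env_eq_uminus_lower_env ereal_minus_le_minus[symmetric, of "g x"])

lemma upper_env_mono:
  "(\<And>y. y \<in> \<Omega> \<Longrightarrow> y \<in> D \<Longrightarrow> g y \<le> h y) \<Longrightarrow> upper_env D \<Omega> g x \<le> upper_env D \<Omega> h x"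
  using lower_env_mono[of \<Omega> D "\<lambda>y. - h y" "\<lambda>y. - g y" x] by (simp add: upper_env_eq_uminus_lower_env)

lemma upper_env_mono_set: "D \<subseteq> E \<Longrightarrow> upper_env D \<Omega> g x \<le> upper_env E \<Omega> g x"
  using lower_env_antimono_set[of D E \<Omega> "\<lambda>y. - g y" x] by (simp add: upper_env_eq_uminus_lower_env)

lemma upper_env_idem:
  assumes "x \<in> \<Omega>"
  shows "upper_env \<Omega> \<Omega> (upper_env D \<Omega> g) x = upper_env D \<Omega> g x"
proof -
  have "(\<lambda>y. - upper_env D \<Omega> g y) = lower_env D \<Omega> (\<lambda>y. - g y)"
    by (simp add: upper_env_eq_uminus_lower_env)
  then show ?thesis
    using lower_env_idem[OF assms, of D "\<lambda>y. - g y"] by (simp add: upper_env_eq_uminus_lower_env)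
qed

lemma dense_subset_approachable:
  assumes "dense_subset D \<Omega>" "x \<in> \<Omega>" "e > 0"
  obtains y where "y \<in> D" "y \<in> \<Omega>" "norm (x - y) < e"
proof -
  have "x \<in> closure D" using assms unfolding dense_subset_def by auto
  then obtain y where "y \<in> D" "dist y x < e" using assms(3) closure_approachable by blast
  then show ?thesis
    using that assms(1) unfolding dense_subset_def by (auto simp: dist_norm norm_minus_commute)
qed

lemma INF_Bd_le_upper_env:
  assumes "dense_subset D \<Omega>" "x \<in> \<Omega>" "\<delta> > 0"
  shows "(INF y\<in>Bd \<Omega> \<delta> x \<inter> D. g y) \<le> upper_env D \<Omega> g x"
  unfolding upper_env_def
proof (rule INF_greatest)
  fix e :: real assume "e \<in> {0<..}"
  then obtain y where y: "y \<in> D" "y \<in> \<Omega>" "norm (x - y) < min \<delta> e"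
    using dense_subset_approachable[OF assms(1,2), of "min \<delta> e"] assms(3) by auto
  have "(INF y\<in>Bd \<Omega> \<delta> x \<inter> D. g y) \<le> g y"
    by (rule INF_lower) (use y in \<open>auto simp: Bd_def\<close>)
  also have "\<dots> \<le> (SUP y\<in>Bd \<Omega> e x \<inter> D. g y)"
    by (rule SUP_upper) (use y in \<open>auto simp: Bd_def\<close>)
  finally show "(INF y\<in>Bd \<Omega> \<delta> x \<inter> D. g y) \<le> (SUP y\<in>Bd \<Omega> e x \<inter> D. g y)" .
qed

lemma lower_env_le_upper_env:
  "dense_subset D \<Omega> \<Longrightarrow> x \<in> \<Omega> \<Longrightarrow> lower_env D \<Omega> g x \<le> upper_env D \<Omega> g x"
  unfolding lower_env_def[of D \<Omega> g x] by (rule SUP_least) (simp add: INF_Bd_le_upper_env)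

lemma lower_env_dense_eq_of_usc:
  assumes D: "dense_subset D \<Omega>" and "x \<in> \<Omega>"
    and usc: "\<And>z. z \<in> \<Omega> \<Longrightarrow> upper_env \<Omega> \<Omega> \<psi> z \<le> \<psi> z"
  shows "lower_env D \<Omega> \<psi> x = lower_env \<Omega> \<Omega> \<psi> x"
proof (rule antisym)
  show "lower_env \<Omega> \<Omega> \<psi> x \<le> lower_env D \<Omega> \<psi> x"
    using D by (intro lower_env_antimono_set) (simp add: dense_subset_def)
  show "lower_env D \<Omega> \<psi> x \<le> lower_env \<Omega> \<Omega> \<psi> x"
    unfolding lower_env_def[of D \<Omega> \<psi> x]
  proof (rule SUP_least)
    fix \<delta> :: real assume "\<delta> \<in> {0<..}"
    have "(INF y\<in>Bd \<Omega> \<delta> x \<inter> D. \<psi> y) \<le> \<psi> z" if z: "z \<in> Bd \<Omega> (\<delta>/2) x \<inter> \<Omega>" for z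
    proof -
      have "(INF y\<in>Bd \<Omega> \<delta> x \<inter> D. \<psi> y) \<le> (INF y\<in>Bd \<Omega> (\<delta>/2) z \<inter> D. \<psi> y)"
        using z by (intro INF_Bd_le_INF_Bd_half) simp
      also have "\<dots> \<le> upper_env D \<Omega> \<psi> z"
        using z \<open>\<delta> \<in> {0<..}\<close> by (intro INF_Bd_le_upper_env D) auto
      also have "\<dots> \<le> upper_env \<Omega> \<Omega> \<psi> z"
        using D by (intro upper_env_mono_set) (simp add: dense_subset_def)
      also have "\<dots> \<le> \<psi> z"
        using z usc by blast
      finally show ?thesis .
    qed
    then have "(INF y\<in>Bd \<Omega> \<delta> x \<inter> D. \<psi> y) \<le> (INF z\<in>Bd \<Omega> (\<delta>/2) x \<inter> \<Omega>. \<psi> z)"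
      by (rule INF_greatest)
    also have "\<dots> \<le> lower_env \<Omega> \<Omega> \<psi> x"
      using \<open>\<delta> \<in> {0<..}\<close> by (intro INF_Bd_le_lower_env) simp
    finally show "(INF y\<in>Bd \<Omega> \<delta> x \<inter> D. \<psi> y) \<le> lower_env \<Omega> \<Omega> \<psi> x" .
  qed
qed

lemma lower_env_dense_lower_env:
  assumes D: "dense_subset D \<Omega>" and x: "x \<in> \<Omega>"
    and usc: "\<And>z. z \<in> \<Omega> \<Longrightarrow> upper_env \<Omega> \<Omega> \<psi> z \<le> \<psi> z"
  shows "lower_env D \<Omega> (lower_env \<Omega> \<Omega> \<psi>) x = lower_env \<Omega> \<Omega> \<psi> x"
proof (rule antisym)
  have "lower_env D \<Omega> (lower_env \<Omega> \<Omega> \<psi>) x \<le> lower_env D \<Omega> \<psi> x"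
    by (intro lower_env_mono lower_env_le)
  also have "\<dots> = lower_env \<Omega> \<Omega> \<psi> x"
    using D x usc by (rule lower_env_dense_eq_of_usc)
  finally show "lower_env D \<Omega> (lower_env \<Omega> \<Omega> \<psi>) x \<le> lower_env \<Omega> \<Omega> \<psi> x" .
  have "lower_env \<Omega> \<Omega> \<psi> x = lower_env \<Omega> \<Omega> (lower_env \<Omega> \<Omega> \<psi>) x"
    using x by (rule lower_env_idem[symmetric])
  also have "\<dots> \<le> lower_env D \<Omega> (lower_env \<Omega> \<Omega> \<psi>) x"
    using D by (intro lower_env_antimono_set) (simp add: dense_subset_def)
  finally show "lower_env \<Omega> \<Omega> \<psi> x \<le> lower_env D \<Omega> (lower_env \<Omega> \<Omega> \<psi>) x" .
qed

lemma upper_env_dense_upper_env: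
  assumes D: "dense_subset D \<Omega>" and x: "x \<in> \<Omega>"
    and lsc: "\<And>z. z \<in> \<Omega> \<Longrightarrow> \<psi> z \<le> lower_env \<Omega> \<Omega> \<psi> z"
  shows "upper_env D \<Omega> (upper_env \<Omega> \<Omega> \<psi>) x = upper_env \<Omega> \<Omega> \<psi> x"
proof -
  have usc: "upper_env \<Omega> \<Omega> (\<lambda>y. - \<psi> y) z \<le> - \<psi> z" if "z \<in> \<Omega>" for z
    using lsc[OF that] by (simp add: upper_env_eq_uminus_lower_env)
  have "(\<lambda>y. - upper_env \<Omega> \<Omega> \<psi> y) = lower_env \<Omega> \<Omega> (\<lambda>y. - \<psi> y)"
    by (simp add: upper_env_eq_uminus_lower_env)
  then show ?thesis
    using lower_env_dense_lower_env[OF D x usc] by (simp add: upper_env_eq_uminus_lower_env)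
qed

lemma upper_lower_upper_lower:
  assumes "x \<in> \<Omega>"
  shows "upper_env \<Omega> \<Omega> (lower_env \<Omega> \<Omega> (upper_env \<Omega> \<Omega> (lower_env \<Omega> \<Omega> u))) x
    = upper_env \<Omega> \<Omega> (lower_env \<Omega> \<Omega> u) x"
proof (rule antisym)
  have "upper_env \<Omega> \<Omega> (lower_env \<Omega> \<Omega> (upper_env \<Omega> \<Omega> (lower_env \<Omega> \<Omega> u))) x
      \<le> upper_env \<Omega> \<Omega> (upper_env \<Omega> \<Omega> (lower_env \<Omega> \<Omega> u)) x"
    by (intro upper_env_mono lower_env_le)
  then show "upper_env \<Omega> \<Omega> (lower_env \<Omega> \<Omega> (upper_env \<Omega> \<Omega> (lower_env \<Omega> \<Omega> u))) x
      \<le> upper_env \<Omega> \<Omega> (lower_env \<Omega> \<Omega> u) x"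
    by (simp add: upper_env_idem[OF assms])
  have "lower_env \<Omega> \<Omega> u y \<le> lower_env \<Omega> \<Omega> (upper_env \<Omega> \<Omega> (lower_env \<Omega> \<Omega> u)) y"
    if "y \<in> \<Omega>" for y
  proof -
    have "lower_env \<Omega> \<Omega> (lower_env \<Omega> \<Omega> u) y
        \<le> lower_env \<Omega> \<Omega> (upper_env \<Omega> \<Omega> (lower_env \<Omega> \<Omega> u)) y"
      by (intro lower_env_mono upper_env_ge)
    then show ?thesis by (simp add: lower_env_idem[OF that])
  qed
  then show "upper_env \<Omega> \<Omega> (lower_env \<Omega> \<Omega> u) x
      \<le> upper_env \<Omega> \<Omega> (lower_env \<Omega> \<Omega> (upper_env \<Omega> \<Omega> (lower_env \<Omega> \<Omega> u))) x"
    by (rule upper_env_mono)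
qed

lemma lower_upper_lower_upper:
  assumes "x \<in> \<Omega>"
  shows "lower_env \<Omega> \<Omega> (upper_env \<Omega> \<Omega> (lower_env \<Omega> \<Omega> (upper_env \<Omega> \<Omega> v))) x
    = lower_env \<Omega> \<Omega> (upper_env \<Omega> \<Omega> v) x"
proof (rule antisym)
  have "lower_env \<Omega> \<Omega> (lower_env \<Omega> \<Omega> (upper_env \<Omega> \<Omega> v)) x
      \<le> lower_env \<Omega> \<Omega> (upper_env \<Omega> \<Omega> (lower_env \<Omega> \<Omega> (upper_env \<Omega> \<Omega> v))) x"
    by (intro lower_env_mono upper_env_ge)
  then show "lower_env \<Omega> \<Omega> (upper_env \<Omega> \<Omega> v) x
      \<le> lower_env \<Omega> \<Omega> (upper_env \<Omega> \<Omega> (lower_env \<Omega> \<Omega> (upper_env \<Omega> \<Omega> v))) x"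
    by (simp add: lower_env_idem[OF assms])
  have "upper_env \<Omega> \<Omega> (lower_env \<Omega> \<Omega> (upper_env \<Omega> \<Omega> v)) y \<le> upper_env \<Omega> \<Omega> v y"
    if "y \<in> \<Omega>" for y
  proof -
    have "upper_env \<Omega> \<Omega> (lower_env \<Omega> \<Omega> (upper_env \<Omega> \<Omega> v)) y
        \<le> upper_env \<Omega> \<Omega> (upper_env \<Omega> \<Omega> v) y"
      by (intro upper_env_mono lower_env_le)
    then show ?thesis by (simp add: upper_env_idem[OF that])
  qed
  then show "lower_env \<Omega> \<Omega> (upper_env \<Omega> \<Omega> (lower_env \<Omega> \<Omega> (upper_env \<Omega> \<Omega> v))) x
      \<le> lower_env \<Omega> \<Omega> (upper_env \<Omega> \<Omega> v) x"
    by (rule lower_env_mono)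
qed

lemma lower_upper_lower_le_lower_upper:
  assumes "\<And>y. y \<in> \<Omega> \<Longrightarrow> u y \<le> v y"
  shows "lower_env \<Omega> \<Omega> (upper_env \<Omega> \<Omega> (lower_env \<Omega> \<Omega> u)) x \<le> lower_env \<Omega> \<Omega> (upper_env \<Omega> \<Omega> v) x"
  using lower_env_le assms by (intro lower_env_mono upper_env_mono) (blast intro: order_trans)

lemma upper_lower_le_upper_lower_upper:
  assumes "\<And>y. y \<in> \<Omega> \<Longrightarrow> u y \<le> v y"
  shows "upper_env \<Omega> \<Omega> (lower_env \<Omega> \<Omega> u) x \<le> upper_env \<Omega> \<Omega> (lower_env \<Omega> \<Omega> (upper_env \<Omega> \<Omega> v)) x"
  using upper_env_ge assms by (intro upper_env_mono lower_env_mono) (blast intro: order_trans)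

lemma S_continuous_Fenv:
  assumes D: "dense_subset D \<Omega>" and f: "f \<in> IA \<Omega>"
  shows "S_continuous \<Omega> (Fenv D \<Omega> f)"
proof -
  have "lower_env D \<Omega> (\<lambda>y. fst (f y)) x \<le> upper_env D \<Omega> (\<lambda>y. snd (f y)) x" if "x \<in> \<Omega>" for x
  proof -
    have "lower_env D \<Omega> (\<lambda>y. fst (f y)) x \<le> lower_env D \<Omega> (\<lambda>y. snd (f y)) x"
      using f by (intro lower_env_mono) (simp add: IA_def)
    also have "\<dots> \<le> upper_env D \<Omega> (\<lambda>y. snd (f y)) x"
      using D that by (rule lower_env_le_upper_env)
    finally show ?thesis .
  qed
  then have IA: "Fenv D \<Omega> f \<in> IA \<Omega>"
    by (simp add: IA_def Fenv_eq_envs[OF f])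
  show ?thesis
    unfolding S_continuous_def
    by (simp add: IA Fenv_eq_envs[OF IA] Fenv_eq_envs[OF f] lower_env_idem upper_env_idem)
qed

lemma D_continuous_ISI_SIS:
  assumes "\<And>y. y \<in> \<Omega> \<Longrightarrow> u y \<le> v y"
  shows "D_continuous \<Omega> (\<lambda>x. (lower_env \<Omega> \<Omega> (upper_env \<Omega> \<Omega> (lower_env \<Omega> \<Omega> u)) x,
                              upper_env \<Omega> \<Omega> (lower_env \<Omega> \<Omega> (upper_env \<Omega> \<Omega> v)) x))"
    (is "D_continuous \<Omega> ?G")
proof -
  have "lower_env \<Omega> \<Omega> (upper_env \<Omega> \<Omega> (lower_env \<Omega> \<Omega> u)) x
      \<le> upper_env \<Omega> \<Omega> (lower_env \<Omega> \<Omega> (upper_env \<Omega> \<Omega> v)) x" if "x \<in> \<Omega>" for x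
    using lower_upper_lower_le_lower_upper[of \<Omega> u v x, OF assms] upper_env_ge[OF that that]
    by (rule order_trans)
  then have "?G \<in> IA \<Omega>"
    by (simp add: IA_def)
  moreover have "Fenv D \<Omega> ?G x = ?G x" if D: "dense_subset D \<Omega>" and x: "x \<in> \<Omega>" for D x
    using \<open>?G \<in> IA \<Omega>\<close>
    by (simp add: Fenv_eq_envs lower_env_dense_lower_env[OF D x] upper_env_dense_upper_env[OF D x]
        lower_env_idem upper_env_idem)
  ultimately show ?thesis
    by (simp add: D_continuous_def)
qed

lemma H_continuous_Fenv_deg:
  assumes SI: "\<And>x. x \<in> \<Omega> \<Longrightarrow> upper_env \<Omega> \<Omega> (lower_env \<Omega> \<Omega> h) x = upper_env \<Omega> \<Omega> h x"
    and IS: "\<And>x. x \<in> \<Omega> \<Longrightarrow> lower_env \<Omega> \<Omega> (upper_env \<Omega> \<Omega> h) x = lower_env \<Omega> \<Omega> h x"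
  shows "H_continuous \<Omega> (Fenv \<Omega> \<Omega> (deg h))"
proof -
  have "lower_env \<Omega> \<Omega> h x \<le> upper_env \<Omega> \<Omega> h x" if "x \<in> \<Omega>" for x
    using lower_env_le[OF that that] upper_env_ge[OF that that] by (rule order_trans)
  then have IA: "Fenv \<Omega> \<Omega> (deg h) \<in> IA \<Omega>"
    by (simp add: IA_def Fenv_deg)
  have "Fenv \<Omega> \<Omega> g x = Fenv \<Omega> \<Omega> (deg h) x"
    if g: "g \<in> IA \<Omega>" and x: "x \<in> \<Omega>"
      and between: "\<And>y. y \<in> \<Omega> \<Longrightarrow> lower_env \<Omega> \<Omega> h y \<le> fst (g y) \<and> snd (g y) \<le> upper_env \<Omega> \<Omega> h y"
    for g x
  proof -
    have g_lower: "lower_env \<Omega> \<Omega> h y \<le> fst (g y)" and g_upper: "snd (g y) \<le> upper_env \<Omega> \<Omega> h y"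
      if "y \<in> \<Omega>" for y
      using between[OF that] by auto
    have g_ordered: "fst (g y) \<le> snd (g y)" if "y \<in> \<Omega>" for y
      using g that by (simp add: IA_def)
    have "lower_env \<Omega> \<Omega> (\<lambda>y. fst (g y)) x \<le> lower_env \<Omega> \<Omega> (upper_env \<Omega> \<Omega> h) x"
      using g_ordered g_upper by (blast intro: lower_env_mono order_trans)
    moreover have "lower_env \<Omega> \<Omega> (lower_env \<Omega> \<Omega> h) x \<le> lower_env \<Omega> \<Omega> (\<lambda>y. fst (g y)) x"
      using g_lower by (blast intro: lower_env_mono)
    moreover have "upper_env \<Omega> \<Omega> (\<lambda>y. snd (g y)) x \<le> upper_env \<Omega> \<Omega> (upper_env \<Omega> \<Omega> h) x"
      using g_upper by (blast intro: upper_env_mono)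
    moreover have "upper_env \<Omega> \<Omega> (lower_env \<Omega> \<Omega> h) x \<le> upper_env \<Omega> \<Omega> (\<lambda>y. snd (g y)) x"
      using g_ordered g_lower by (blast intro: upper_env_mono order_trans)
    ultimately show ?thesis
      using x by (simp add: Fenv_eq_envs[OF g] Fenv_deg SI IS lower_env_idem upper_env_idem antisym)
  qed
  with IA show ?thesis
    by (simp add: H_continuous_def Fenv_deg)
qed

lemma H_continuous_Fenv_SI: "H_continuous \<Omega> (Fenv \<Omega> \<Omega> (deg (upper_env \<Omega> \<Omega> (lower_env \<Omega> \<Omega> u))))"
proof (rule H_continuous_Fenv_deg)
  fix x assume x: "x \<in> \<Omega>"
  show "upper_env \<Omega> \<Omega> (lower_env \<Omega> \<Omega> (upper_env \<Omega> \<Omega> (lower_env \<Omega> \<Omega> u))) x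
      = upper_env \<Omega> \<Omega> (upper_env \<Omega> \<Omega> (lower_env \<Omega> \<Omega> u)) x"
    using x by (simp add: upper_lower_upper_lower upper_env_idem)
  show "lower_env \<Omega> \<Omega> (upper_env \<Omega> \<Omega> (upper_env \<Omega> \<Omega> (lower_env \<Omega> \<Omega> u))) x
      = lower_env \<Omega> \<Omega> (upper_env \<Omega> \<Omega> (lower_env \<Omega> \<Omega> u)) x"
    by (intro antisym lower_env_mono) (simp_all add: upper_env_idem)
qed

lemma H_continuous_Fenv_IS: "H_continuous \<Omega> (Fenv \<Omega> \<Omega> (deg (lower_env \<Omega> \<Omega> (upper_env \<Omega> \<Omega> v))))"
proof (rule H_continuous_Fenv_deg)
  fix x assume x: "x \<in> \<Omega>"
  show "upper_env \<Omega> \<Omega> (lower_env \<Omega> \<Omega> (lower_env \<Omega> \<Omega> (upper_env \<Omega> \<Omega> v))) x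
      = upper_env \<Omega> \<Omega> (lower_env \<Omega> \<Omega> (upper_env \<Omega> \<Omega> v)) x"
    by (intro antisym upper_env_mono) (simp_all add: lower_env_idem)
  show "lower_env \<Omega> \<Omega> (upper_env \<Omega> \<Omega> (lower_env \<Omega> \<Omega> (upper_env \<Omega> \<Omega> v))) x
      = lower_env \<Omega> \<Omega> (lower_env \<Omega> \<Omega> (upper_env \<Omega> \<Omega> v)) x"
    using x by (simp add: lower_upper_lower_upper lower_env_idem)
qed

lemma ile_Fenv_SI_IS:
  assumes "\<And>y. y \<in> \<Omega> \<Longrightarrow> u y \<le> v y"
  shows "ile \<Omega> (Fenv \<Omega> \<Omega> (deg (upper_env \<Omega> \<Omega> (lower_env \<Omega> \<Omega> u))))
                 (Fenv \<Omega> \<Omega> (deg (lower_env \<Omega> \<Omega> (upper_env \<Omega> \<Omega> v))))"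
  using lower_upper_lower_le_lower_upper[of \<Omega> u v, OF assms]
    upper_lower_le_upper_lower_upper[of \<Omega> u v, OF assms]
  by (simp add: ile_def Fenv_deg lower_env_idem upper_env_idem)

theorem theorem2:
  fixes \<Omega> :: "(real ^ 'n) set" and f :: "real ^ 'n \<Rightarrow> ereal \<times> ereal"
  assumes "open \<Omega>" and "f \<in> IA \<Omega>"
  shows "(\<forall>D. dense_subset D \<Omega> \<longrightarrow> S_continuous \<Omega> (Fenv D \<Omega> f))
    \<and> D_continuous \<Omega>
        (\<lambda>x. (Ilow \<Omega> \<Omega> (deg (Supp \<Omega> \<Omega> (deg (Ilow \<Omega> \<Omega> f)))) x,
              Supp \<Omega> \<Omega> (deg (Ilow \<Omega> \<Omega> (deg (Supp \<Omega> \<Omega> f)))) x))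
    \<and> H_continuous \<Omega> (Fenv \<Omega> \<Omega> (deg (Supp \<Omega> \<Omega> (deg (Ilow \<Omega> \<Omega> f)))))
    \<and> H_continuous \<Omega> (Fenv \<Omega> \<Omega> (deg (Ilow \<Omega> \<Omega> (deg (Supp \<Omega> \<Omega> f)))))
    \<and> ile \<Omega> (Fenv \<Omega> \<Omega> (deg (Supp \<Omega> \<Omega> (deg (Ilow \<Omega> \<Omega> f)))))
             (Fenv \<Omega> \<Omega> (deg (Ilow \<Omega> \<Omega> (deg (Supp \<Omega> \<Omega> f)))))"
proof -
  define u where "u = (\<lambda>y. fst (f y))"
  define v where "v = (\<lambda>y. snd (f y))"
  have uv: "u y \<le> v y" if "y \<in> \<Omega>" for y
    using assms(2) that by (simp add: IA_def u_def v_def)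
  have "Ilow \<Omega> \<Omega> f = lower_env \<Omega> \<Omega> u" and "Supp \<Omega> \<Omega> f = upper_env \<Omega> \<Omega> v"
    using assms(2) by (simp_all add: Ilow_eq_lower_env Supp_eq_upper_env u_def v_def)
  then show ?thesis
    using S_continuous_Fenv[OF _ assms(2)] D_continuous_ISI_SIS[of \<Omega> u v, OF uv] ile_Fenv_SI_IS[of \<Omega> u v, OF uv]
      H_continuous_Fenv_SI[of \<Omega> u] H_continuous_Fenv_IS[of \<Omega> v]
    by simp
qed

end
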